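(* Let $(\alpha_n)_{n\ge0}$ be complex numbers with $0<|\alpha_n|<1$ for all $n$. For all nonnegative integers $n,r,s$, \[ \sum_{p\in\mathrm{Sch}_{n,r,s}}\mathrm{wt}_S(p)=\sum_{q\in\mathfrak{L}_{n,r,s}}\mathrm{wt}_L(q). \]
   Context: Set $\alpha_{-1}=-1$. A Łukasiewicz path is a lattice path in $\mathbb{Z}\times\mathbb{Z}_{\ge0}$ with steps $(1,k)$, $k\le1$ an integer; $\mathfrak{L}_{n,r,s}$ is the set of such paths from $(0,r)$ to $(n,s)$. $\mathrm{wt}_L$ is the product of step weights, where $(a,b)\to(a+1,b+1)$ has weight $1$ and $(a,b)\to(a+1,b-k)$, $k=0,\dots,b$, has weight $-\alpha_b\overline{\alpha_{b-k-1}}\prod_{j=b-k}^{b-1}(1-|\alpha_j|^2)$ (empty product $1$). A Schröder path is a lattice path in $\mathbb{Z}\times\mathbb{Z}_{\ge0}$ with steps $(1,1)$, $(1,0)$, $(0,-1)$; $\mathrm{Sch}_{n,r,s}$ is the set of Schröder paths from $(0,r)$ to $(n,s)$ not starting with a step $(0,-1)$. $\mathrm{wt}_S$ is the product of step weights: $(a,b)\to(a+1,b+1)$ weight $1$; $(a,b)\to(a+1,b)$ weight $-\overline{\alpha_{b-1}}/\overline{\alpha_b}$; $(a,b)\to(a,b-1)$ weight $\frac{\overline{\alpha_{b-2}}}{\overline{\alpha_{b-1}}}(1-|\alpha_{b-1}|^2)$. *)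

theory Defs
  imports Complex_Main
begin

definition aext :: "(nat \<Rightarrow> complex) \<Rightarrow> int \<Rightarrow> complex" where
  "aext a j = (if j = -1 then -1 else a (nat j))"

text \<open>A Lukasiewicz path from (0,r) to (n,s) is represented by its list of heights
  [h_0,...,h_n] (heights are nat, so the path stays in the upper half plane);
  consecutive heights satisfy h_{i+1} <= h_i + 1.\<close>
definition luk_paths :: "nat \<Rightarrow> nat \<Rightarrow> nat \<Rightarrow> nat list set" where
  "luk_paths n r s = {hs. length hs = Suc n \<and> hs ! 0 = r \<and> hs ! n = s \<and>
      (\<forall>i<n. hs ! Suc i \<le> Suc (hs ! i))}"

definition luk_step_wt :: "(nat \<Rightarrow> complex) \<Rightarrow> nat \<Rightarrow> nat \<Rightarrow> complex" where
  "luk_step_wt a b b' = (if b' = Suc b then 1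
     else - aext a (int b) * cnj (aext a (int b' - 1)) *
          (\<Prod>j\<in>{b'..<b}. 1 - complex_of_real ((cmod (a j))\<^sup>2)))"

definition luk_wt :: "(nat \<Rightarrow> complex) \<Rightarrow> nat list \<Rightarrow> complex" where
  "luk_wt a hs = (\<Prod>i<length hs - 1. luk_step_wt a (hs ! i) (hs ! Suc i))"

text \<open>Steps: U = (1,1), H = (1,0), D = (0,-1). A path is a step list together
  with its starting height.\<close>
datatype sstep = U | H | D

primrec sch_valid :: "nat \<Rightarrow> sstep list \<Rightarrow> bool" where
  "sch_valid b [] = True"
| "sch_valid b (x # xs) = (case x of U \<Rightarrow> sch_valid (Suc b) xs
      | H \<Rightarrow> sch_valid b xs | D \<Rightarrow> (0 < b \<and> sch_valid (b - 1) xs))"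

primrec sch_end :: "nat \<Rightarrow> sstep list \<Rightarrow> nat" where
  "sch_end b [] = b"
| "sch_end b (x # xs) = (case x of U \<Rightarrow> sch_end (Suc b) xs
      | H \<Rightarrow> sch_end b xs | D \<Rightarrow> sch_end (b - 1) xs)"

definition sch_paths :: "nat \<Rightarrow> nat \<Rightarrow> nat \<Rightarrow> sstep list set" where
  "sch_paths n r s = {p. sch_valid r p \<and> sch_end r p = s \<and>
      length (filter (\<lambda>x. x \<noteq> D) p) = n \<and> (p \<noteq> [] \<longrightarrow> hd p \<noteq> D)}"

primrec sch_wt :: "(nat \<Rightarrow> complex) \<Rightarrow> nat \<Rightarrow> sstep list \<Rightarrow> complex" where
  "sch_wt a b [] = 1"
| "sch_wt a b (x # xs) = (case x of
      U \<Rightarrow> sch_wt a (Suc b) xs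
    | H \<Rightarrow> (- cnj (aext a (int b - 1)) / cnj (aext a (int b))) * sch_wt a b xs
    | D \<Rightarrow> (cnj (aext a (int b - 2)) / cnj (aext a (int b - 1)) *
            (1 - complex_of_real ((cmod (aext a (int b - 1)))\<^sup>2))) * sch_wt a (b - 1) xs)"

end

theory Submission
  imports Defs
begin

text \<open>Both sums satisfy the same recursion in n. A Schroeder path from height b starts
  with U or H, then descends by a maximal run of D steps to some height c, and continues as a
  Schroeder path from c with one non-vertical step fewer. The run of D steps from height h to c
  has weight conj(alpha_(c-1)) / conj(alpha_(h-1)) times the product of the 1 - |alpha_j|^2
  for c \<le> j < h, since the quotients telescope; adding the two cases U (h = b + 1) and
  H (h = b) gives exactly the weight of the Lukasiewicz step from b to c.\<close>

definition sch_walks :: "nat \<Rightarrow> nat \<Rightarrow> nat \<Rightarrow> sstep list set" where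
  "sch_walks n b s = {p. sch_valid b p \<and> sch_end b p = s \<and> length (filter (\<lambda>x. x \<noteq> D) p) = n}"

lemma sch_paths_conv_walks: "sch_paths n b s = {p \<in> sch_walks n b s. p \<noteq> [] \<longrightarrow> hd p \<noteq> D}"
  unfolding sch_paths_def sch_walks_def by auto

lemma sch_walks_0: "sch_walks n 0 s = sch_paths n 0 s"
  unfolding sch_paths_conv_walks sch_walks_def
  by (auto simp: neq_Nil_conv split: sstep.splits)

lemma sch_walks_Suc: "sch_walks n (Suc b) s = sch_paths n (Suc b) s \<union> Cons D ` sch_walks n b s"
  unfolding sch_paths_conv_walks sch_walks_def
  by (auto simp: neq_Nil_conv image_iff)

lemma sch_paths_0: "sch_paths 0 b s = (if b = s then {[]} else {})"
proof -
  have "sch_paths 0 b s \<subseteq> {[]}"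
    by (auto simp: sch_paths_def filter_empty_conv dest: hd_in_set)
  moreover have "[] \<in> sch_paths 0 b s \<longleftrightarrow> b = s"
    by (simp add: sch_paths_def)
  ultimately show ?thesis by auto
qed

lemma sch_paths_Suc:
  "sch_paths (Suc n) b s = Cons U ` sch_walks n (Suc b) s \<union> Cons H ` sch_walks n b s"
proof (intro set_eqI iffI)
  fix p assume "p \<in> sch_paths (Suc n) b s"
  then show "p \<in> Cons U ` sch_walks n (Suc b) s \<union> Cons H ` sch_walks n b s"
    by (cases p) (auto simp: sch_paths_def sch_walks_def split: sstep.splits)
qed (auto simp: sch_paths_def sch_walks_def)

lemma finite_sch_walks: "finite (sch_walks n b s)"
proof (induction n arbitrary: b)
  case 0
  show ?case by (induction b) (simp_all add: sch_walks_0 sch_walks_Suc sch_paths_0)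
next
  case (Suc n)
  show ?case
    by (induction b)
      (simp_all add: sch_walks_0[of "Suc n"] sch_walks_Suc[of "Suc n"] sch_paths_Suc Suc.IH)
qed

lemma finite_sch_paths: "finite (sch_paths n b s)"
  using finite_sch_walks[of n b s] by (simp add: sch_paths_conv_walks)

lemma luk_paths_0: "luk_paths 0 b s = (if b = s then {[b]} else {})"
  by (auto simp: luk_paths_def length_Suc_conv)

lemma luk_paths_Suc:
  "luk_paths (Suc n) b s = (\<lambda>(c, hs). b # hs) ` (SIGMA c:{..Suc b}. luk_paths n c s)"
  by (auto simp: luk_paths_def length_Suc_conv All_less_Suc2 image_iff)

lemma finite_luk_paths: "finite (luk_paths n b s)"
  by (induction n arbitrary: b) (auto simp: luk_paths_0 luk_paths_Suc)

lemma luk_wt_Cons_Cons: "luk_wt a (b # c # hs) = luk_step_wt a b c * luk_wt a (c # hs)"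
  by (simp add: luk_wt_def prod.lessThan_Suc_shift del: prod.lessThan_Suc)

definition sch_flat_wt :: "(nat \<Rightarrow> complex) \<Rightarrow> nat \<Rightarrow> complex" where
  "sch_flat_wt a b = - cnj (aext a (int b - 1)) / cnj (a b)"

definition sch_down_wt :: "(nat \<Rightarrow> complex) \<Rightarrow> nat \<Rightarrow> complex" where
  "sch_down_wt a b = cnj (aext a (int b - 1)) / cnj (a b) * (1 - complex_of_real ((cmod (a b))\<^sup>2))"

lemma aext_nat [simp]: "aext a (int b) = a b"
  by (simp add: aext_def)

lemma aext_minus_1_nonzero: "\<forall>m. a m \<noteq> 0 \<Longrightarrow> aext a (int c - 1) \<noteq> 0"
  by (cases c) (auto simp: aext_def)

lemma sch_wt_Cons_D: "sch_wt a (Suc b) (D # p) = sch_down_wt a b * sch_wt a b p"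
  by (simp add: sch_down_wt_def)

definition sch_descent_wt :: "(nat \<Rightarrow> complex) \<Rightarrow> nat \<Rightarrow> nat \<Rightarrow> complex" where
  "sch_descent_wt a b c = cnj (aext a (int c - 1)) / cnj (aext a (int b - 1)) *
     (\<Prod>j\<in>{c..<b}. 1 - complex_of_real ((cmod (a j))\<^sup>2))"

lemma sch_descent_wt_same: "\<forall>m. a m \<noteq> 0 \<Longrightarrow> sch_descent_wt a b b = 1"
  using aext_minus_1_nonzero[of a b] by (simp add: sch_descent_wt_def)

lemma sch_descent_wt_Suc:
  assumes "\<forall>m. a m \<noteq> 0" and "c \<le> b"
  shows "sch_descent_wt a (Suc b) c = sch_down_wt a b * sch_descent_wt a b c"
  using assms aext_minus_1_nonzero[of a b]
  by (simp add: sch_descent_wt_def sch_down_wt_def prod.atLeastLessThan_Suc field_simps)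

lemma sum_sch_walks_Suc:
  "(\<Sum>p\<in>sch_walks n (Suc b) s. sch_wt a (Suc b) p) =
     (\<Sum>p\<in>sch_paths n (Suc b) s. sch_wt a (Suc b) p) +
     sch_down_wt a b * (\<Sum>p\<in>sch_walks n b s. sch_wt a b p)"
proof -
  have "sch_paths n (Suc b) s \<inter> Cons D ` sch_walks n b s = {}"
    by (auto simp: sch_paths_def)
  then have "(\<Sum>p\<in>sch_walks n (Suc b) s. sch_wt a (Suc b) p) =
      (\<Sum>p\<in>sch_paths n (Suc b) s. sch_wt a (Suc b) p) +
      (\<Sum>p\<in>sch_walks n b s. sch_wt a (Suc b) (D # p))"
    unfolding sch_walks_Suc
    by (simp add: sum.union_disjoint finite_sch_paths finite_sch_walks sum.reindex)
  then show ?thesis by (simp only: sch_wt_Cons_D sum_distrib_left)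
qed

lemma sum_sch_walks:
  assumes "\<forall>m. a m \<noteq> 0"
  shows "(\<Sum>p\<in>sch_walks n b s. sch_wt a b p) =
    (\<Sum>c\<le>b. sch_descent_wt a b c * (\<Sum>p\<in>sch_paths n c s. sch_wt a c p))"
proof (induction b)
  case 0
  then show ?case by (simp add: sch_walks_0 sch_descent_wt_same[OF assms])
next
  case (Suc b)
  then show ?case
    by (simp add: sum_sch_walks_Suc sch_descent_wt_same[OF assms] sch_descent_wt_Suc[OF assms]
        sum_distrib_left mult.assoc)
qed

lemma sum_sch_paths_Suc:
  "(\<Sum>p\<in>sch_paths (Suc n) b s. sch_wt a b p) =
     (\<Sum>p\<in>sch_walks n (Suc b) s. sch_wt a (Suc b) p) +
     sch_flat_wt a b * (\<Sum>p\<in>sch_walks n b s. sch_wt a b p)"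
proof -
  have "Cons U ` sch_walks n (Suc b) s \<inter> Cons H ` sch_walks n b s = {}"
    by auto
  then have "(\<Sum>p\<in>sch_paths (Suc n) b s. sch_wt a b p) =
      (\<Sum>p\<in>sch_walks n (Suc b) s. sch_wt a b (U # p)) +
      (\<Sum>p\<in>sch_walks n b s. sch_wt a b (H # p))"
    unfolding sch_paths_Suc by (simp add: sum.union_disjoint finite_sch_walks sum.reindex)
  then show ?thesis by (simp add: sch_flat_wt_def sum_distrib_left)
qed

lemma sum_luk_paths_Suc:
  "(\<Sum>q\<in>luk_paths (Suc n) b s. luk_wt a q) =
     (\<Sum>c\<le>Suc b. luk_step_wt a b c * (\<Sum>q\<in>luk_paths n c s. luk_wt a q))"
proof -
  have "inj_on (\<lambda>(c, hs). b # hs) (SIGMA c:{..Suc b}. luk_paths n c s)"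
    by (auto simp: inj_on_def luk_paths_def)
  then have "(\<Sum>q\<in>luk_paths (Suc n) b s. luk_wt a q) =
      (\<Sum>(c, hs)\<in>(SIGMA c:{..Suc b}. luk_paths n c s). luk_wt a (b # hs))"
    unfolding luk_paths_Suc by (simp add: sum.reindex case_prod_unfold)
  also have "\<dots> = (\<Sum>(c, hs)\<in>(SIGMA c:{..Suc b}. luk_paths n c s). luk_step_wt a b c * luk_wt a hs)"
  proof (rule sum.cong)
    fix x assume "x \<in> (SIGMA c:{..Suc b}. luk_paths n c s)"
    then obtain c hs where "x = (c, hs)" "hs \<in> luk_paths n c s" by blast
    then show "(case x of (c, hs) \<Rightarrow> luk_wt a (b # hs)) =
        (case x of (c, hs) \<Rightarrow> luk_step_wt a b c * luk_wt a hs)"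
      by (cases hs) (auto simp: luk_wt_Cons_Cons luk_paths_def)
  qed simp
  also have "\<dots> = (\<Sum>c\<le>Suc b. luk_step_wt a b c * (\<Sum>q\<in>luk_paths n c s. luk_wt a q))"
    by (simp add: sum.Sigma[symmetric] finite_luk_paths sum_distrib_left)
  finally show ?thesis .
qed

lemma luk_step_wt_conv_sch_descent_wt:
  assumes nz: "\<forall>m. a m \<noteq> 0" and "c \<le> Suc b"
  shows "luk_step_wt a b c =
    sch_descent_wt a (Suc b) c + (if c \<le> b then sch_flat_wt a b * sch_descent_wt a b c else 0)"
proof (cases "c = Suc b")
  case True
  then show ?thesis by (simp add: luk_step_wt_def sch_descent_wt_same[OF nz])
next
  case False
  with assms have "c \<le> b" by simp
  moreover have "complex_of_real ((cmod (a b))\<^sup>2) = a b * cnj (a b)"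
    by (rule complex_norm_square)
  ultimately show ?thesis
    using nz aext_minus_1_nonzero[OF nz, of b]
    by (simp add: luk_step_wt_def sch_descent_wt_def sch_flat_wt_def prod.atLeastLessThan_Suc
        field_simps)
qed

theorem proposition3p11:
  fixes a :: "nat \<Rightarrow> complex" and n r s :: nat
  assumes "\<forall>m. 0 < cmod (a m) \<and> cmod (a m) < 1"
  shows "(\<Sum>p\<in>sch_paths n r s. sch_wt a r p) = (\<Sum>q\<in>luk_paths n r s. luk_wt a q)"
proof (induction n arbitrary: r)
  case 0
  then show ?case by (simp add: sch_paths_0 luk_paths_0 luk_wt_def)
next
  case (Suc n b)
  have nz: "\<forall>m. a m \<noteq> 0" using assms by auto
  define L where "L c = (\<Sum>q\<in>luk_paths n c s. luk_wt a q)" for c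
  have "(\<Sum>p\<in>sch_paths (Suc n) b s. sch_wt a b p) =
      (\<Sum>c\<le>Suc b. sch_descent_wt a (Suc b) c * L c) +
      sch_flat_wt a b * (\<Sum>c\<le>b. sch_descent_wt a b c * L c)"
    by (simp add: sum_sch_paths_Suc sum_sch_walks[OF nz] Suc.IH L_def)
  also have "\<dots> = (\<Sum>c\<le>Suc b. (sch_descent_wt a (Suc b) c +
      (if c \<le> b then sch_flat_wt a b * sch_descent_wt a b c else 0)) * L c)"
    by (simp add: sum.distrib distrib_right sum_distrib_left mult.assoc)
  also have "\<dots> = (\<Sum>c\<le>Suc b. luk_step_wt a b c * L c)"
    by (rule sum.cong) (simp_all add: luk_step_wt_conv_sch_descent_wt[OF nz])
  finally show ?case by (simp add: sum_luk_paths_Suc L_def)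
qed

end
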